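(* Let $G$ be a graph with $V(G)=[n]$ and without isolated vertices, and let $I=[n]\setminus[n-i]$ be a maximal independent set of $G$ with $\gamma(G;I)=i\gamma(G)$. Write $\overline{S}=[n]\setminus S$ and order the facets of $\mathcal{NC}(G)$ by $\prec$. For $\sigma\in\mathcal{NC}(G)$ let $\beta(\sigma)=|N(\overline{\sigma}\cap\overline{I})\cap\overline{\sigma}\cap I|$. Then for every $\sigma\in\mathcal{NC}(G)$ with $\beta(\sigma)\ge1$ we have $|M_\prec(\sigma)|\le n-i\gamma(G)-\beta(\sigma)$, and for every $\sigma\in\mathcal{NC}(G)$ we have $|M_\prec(\sigma)|\le n-i\gamma(G)-1$.
   Context: $\mathcal{NC}(G)$ is the simplicial complex on $V(G)$ whose faces are the sets $W\subseteq V(G)$ such that $V(G)\setminus W$ contains both endpoints of some edge; its facets are the sets $[n]\setminus\{a,b\}$ for edges $ab$. $\gamma(G;A)$ is the minimum size of a set $D$ such that every vertex of $A$ has a neighbor in $D$; $i\gamma(G)=\max\{\gamma(G;I): I\text{ independent}\}$. $N(S)=\{v: uv\in E(G)\text{ for some }u\in S\}$. For edges $a_1b_1,a_2b_2$ with $a_j<b_j$, $a_1b_1<_L a_2b_2$ if $b_1<b_2$, or $b_1=b_2$ and $a_1<a_2$; for distinct facets, $\sigma\prec\tau$ iff $\overline{\sigma}<_L\overline{\tau}$, giving a linear order $\sigma_1,\dots,\sigma_m$ of facets. For a face $\sigma$, let $i$ be least with $\sigma\subseteq\sigma_i$; if $i=1$, $\mathrm{mes}_\prec(\sigma)$ is empty;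 otherwise $\mathrm{mes}_\prec(\sigma)=(v_1,\dots,v_{i-1})$ with $v_1=\min(\sigma\setminus\sigma_1)$ and, for $2\le k\le i-1$, $v_k=\min(\{v_1,\dots,v_{k-1}\}\cap(\sigma\setminus\sigma_k))$ if nonempty, else $v_k=\min(\sigma\setminus\sigma_k)$. $M_\prec(\sigma)$ is the set of vertices appearing in $\mathrm{mes}_\prec(\sigma)$. *)

theory Defs
  imports Main
begin

definition simple_graph :: "nat \<Rightarrow> nat set set \<Rightarrow> bool" where
  "simple_graph n E \<longleftrightarrow> (\<forall>e\<in>E. card e = 2 \<and> e \<subseteq> {1..n})"

definition no_isolated :: "nat \<Rightarrow> nat set set \<Rightarrow> bool" where
  "no_isolated n E \<longleftrightarrow> (\<forall>v\<in>{1..n}. \<exists>e\<in>E. v \<in> e)"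

definition nbhd :: "nat set set \<Rightarrow> nat set \<Rightarrow> nat set" where
  "nbhd E S = {v. \<exists>u\<in>S. {u, v} \<in> E}"

definition indep :: "nat \<Rightarrow> nat set set \<Rightarrow> nat set \<Rightarrow> bool" where
  "indep n E I \<longleftrightarrow> I \<subseteq> {1..n} \<and> (\<forall>e\<in>E. \<not> e \<subseteq> I)"

definition maximal_indep :: "nat \<Rightarrow> nat set set \<Rightarrow> nat set \<Rightarrow> bool" where
  "maximal_indep n E I \<longleftrightarrow> indep n E I \<and> (\<forall>J. indep n E J \<and> I \<subseteq> J \<longrightarrow> J = I)"

definition gammaA :: "nat \<Rightarrow> nat set set \<Rightarrow> nat set \<Rightarrow> nat" where
  "gammaA n E A = Min {card D | D. D \<subseteq> {1..n} \<and> (\<forall>a\<in>A. \<exists>d\<in>D. {a, d} \<in> E)}"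

definition igamma :: "nat \<Rightarrow> nat set set \<Rightarrow> nat" where
  "igamma n E = Max {gammaA n E I | I. indep n E I}"

definition NC :: "nat \<Rightarrow> nat set set \<Rightarrow> nat set set" where
  "NC n E = {W. W \<subseteq> {1..n} \<and> (\<exists>e\<in>E. e \<subseteq> {1..n} - W)}"

definition edge_lt :: "nat set \<Rightarrow> nat set \<Rightarrow> bool" where
  "edge_lt e f \<longleftrightarrow> Max e < Max f \<or> (Max e = Max f \<and> Min e < Min f)"

definition edge_rank :: "nat set set \<Rightarrow> nat set \<Rightarrow> nat" where
  "edge_rank E e = card {f \<in> E. edge_lt f e} + 1"

text \<open>The j-th facet (1-based) sigma_j = [n] minus the j-th edge in the order <_L.\<close>
definition facet :: "nat \<Rightarrow> nat set set \<Rightarrow> nat \<Rightarrow> nat set" where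
  "facet n E j = {1..n} - (THE e. e \<in> E \<and> edge_rank E e = j)"

definition first_idx :: "nat \<Rightarrow> nat set set \<Rightarrow> nat set \<Rightarrow> nat" where
  "first_idx n E \<sigma> = (LEAST j. 1 \<le> j \<and> j \<le> card E \<and> \<sigma> \<subseteq> facet n E j)"

primrec mes_seq :: "(nat \<Rightarrow> nat set) \<Rightarrow> nat set \<Rightarrow> nat \<Rightarrow> nat list" where
  "mes_seq F \<sigma> 0 = []"
| "mes_seq F \<sigma> (Suc k) =
     (let prev = mes_seq F \<sigma> k;
          D = \<sigma> - F (Suc k);
          C = set prev \<inter> D
      in prev @ [if C \<noteq> {} then Min C else Min D])"

definition mes :: "nat \<Rightarrow> nat set set \<Rightarrow> nat set \<Rightarrow> nat list" where
  "mes n E \<sigma> = mes_seq (facet n E) \<sigma> (first_idx n E \<sigma> - 1)"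

definition Mset :: "nat \<Rightarrow> nat set set \<Rightarrow> nat set \<Rightarrow> nat set" where
  "Mset n E \<sigma> = set (mes n E \<sigma>)"

definition beta :: "nat \<Rightarrow> nat set set \<Rightarrow> nat set \<Rightarrow> nat set \<Rightarrow> nat" where
  "beta n E I \<sigma> = card (nbhd E (({1..n} - \<sigma>) \<inter> ({1..n} - I)) \<inter> ({1..n} - \<sigma>) \<inter> I)"

end

theory Submission
  imports Defs
begin

text \<open>Let \<open>\<sigma>_t\<close> be the first facet containing \<open>\<sigma>\<close>, with missing edge \<open>e_t\<close>. Every vertex
  \<open>x\<close> of \<open>M = M(\<sigma>)\<close> is the least vertex of \<open>\<sigma> \<inter> e_j\<close> for an edge \<open>e_j <_L e_t\<close>, so
  \<open>x \<le> max e_t\<close>; if moreover \<open>x \<in> I\<close>, the other end of \<open>e_j\<close> lies below the top segment \<open>I\<close>,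
  hence outside \<open>\<sigma>\<close> and outside \<open>M\<close>. Let \<open>R\<close> be the vertices of \<open>I - M\<close> with a neighbour outside
  \<open>M\<close>. Then \<open>[n] - (I \<union> M)\<close>, together with one neighbour of each vertex of \<open>I - M - R\<close>,
  dominates \<open>I\<close>, whence \<open>i\<gamma>(G) + |M| + |R| \<le> n\<close>. Finally \<open>\<beta>(\<sigma>) \<le> |R|\<close>, and \<open>R \<noteq> {}\<close>:
  either \<open>max e_t \<in> I\<close>, or by maximality of \<open>I\<close> it has a neighbour in \<open>I\<close>, which exceeds
  \<open>max e_t\<close> and so is not in \<open>M\<close>.\<close>

lemma simple_graph_finite: "simple_graph n E \<Longrightarrow> finite E"
  unfolding simple_graph_def by (rule finite_subset[of E "Pow {1..n}"]) auto

lemma simple_graph_edge_subset: "simple_graph n E \<Longrightarrow> e \<in> E \<Longrightarrow> e \<subseteq> {1..n}"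
  by (simp add: simple_graph_def)

lemma simple_graph_edgeE:
  assumes "simple_graph n E" "e \<in> E"
  obtains a b where "e = {a, b}" "a < b" "1 \<le> a" "b \<le> n"
proof -
  from assms have two: "card e = 2" and sub: "e \<subseteq> {1..n}" by (auto simp: simple_graph_def)
  from two obtain x y where xy: "e = {x, y}" "x \<noteq> y" by (auto simp: card_2_iff)
  show thesis
  proof (cases "x < y")
    case True
    then show thesis using xy sub by (intro that[of x y]) auto
  next
    case False
    then show thesis using xy sub by (intro that[of y x]) (auto simp: insert_commute)
  qed
qed

lemma simple_graph_other_endE:
  assumes "simple_graph n E" "e \<in> E" "x \<in> e"
  obtains w where "e = {x, w}" "w \<noteq> x"
  using simple_graph_edgeE[OF assms(1,2)] assms(3) that
  by (metis insert_commute insertE less_irrefl singletonD)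

lemma edge_lt_irrefl: "\<not> edge_lt e e"
  by (simp add: edge_lt_def)

lemma edge_lt_trans: "edge_lt e f \<Longrightarrow> edge_lt f g \<Longrightarrow> edge_lt e g"
  unfolding edge_lt_def by auto

lemma edge_lt_total:
  assumes "simple_graph n E" "e \<in> E" "f \<in> E" "e \<noteq> f"
  shows "edge_lt e f \<or> edge_lt f e"
proof -
  obtain a b where ab: "e = {a, b}" "a < b" using simple_graph_edgeE[OF assms(1,2)] by metis
  obtain c d where cd: "f = {c, d}" "c < d" using simple_graph_edgeE[OF assms(1,3)] by metis
  have "Max e = b" "Min e = a" "Max f = d" "Min f = c" using ab cd by auto
  then show ?thesis using ab cd assms(4) unfolding edge_lt_def by auto
qed

lemma edge_rank_less:
  assumes "finite E" "e \<in> E" "f \<in> E" "edge_lt e f"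
  shows "edge_rank E e < edge_rank E f"
proof -
  have "{g \<in> E. edge_lt g e} \<subset> {g \<in> E. edge_lt g f}"
    using assms edge_lt_trans edge_lt_irrefl by blast
  then show ?thesis unfolding edge_rank_def using assms(1) by (simp add: psubset_card_mono)
qed

lemma edge_rank_bounds:
  assumes "finite E" "e \<in> E"
  shows "1 \<le> edge_rank E e" "edge_rank E e \<le> card E"
proof -
  have "{g \<in> E. edge_lt g e} \<subseteq> E - {e}" using edge_lt_irrefl by auto
  then have "card {g \<in> E. edge_lt g e} \<le> card E - 1"
    using assms card_mono[of "E - {e}"] by fastforce
  moreover have "card E > 0" using assms card_gt_0_iff by blast
  ultimately show "1 \<le> edge_rank E e" "edge_rank E e \<le> card E" unfolding edge_rank_def by auto
qed

lemma inj_on_edge_rank: "simple_graph n E \<Longrightarrow> inj_on (edge_rank E) E"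
  using edge_lt_total edge_rank_less[OF simple_graph_finite] unfolding inj_on_def
  by (metis less_irrefl)

lemma edge_rank_image: "simple_graph n E \<Longrightarrow> edge_rank E ` E = {1..card E}"
  using edge_rank_bounds[OF simple_graph_finite] card_image[OF inj_on_edge_rank]
  by (intro card_subset_eq) auto

definition nth_edge :: "nat set set \<Rightarrow> nat \<Rightarrow> nat set" where
  "nth_edge E j = (THE e. e \<in> E \<and> edge_rank E e = j)"

lemma facet_eq: "facet n E j = {1..n} - nth_edge E j"
  unfolding facet_def nth_edge_def ..

lemma nth_edge_in_edges:
  assumes "simple_graph n E" "1 \<le> j" "j \<le> card E"
  shows "nth_edge E j \<in> E" "edge_rank E (nth_edge E j) = j"
proof -
  obtain e where "e \<in> E" "edge_rank E e = j"
    using edge_rank_image[OF assms(1)] assms(2,3) by (metis atLeastAtMost_iff imageE)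
  then have "\<exists>!e. e \<in> E \<and> edge_rank E e = j"
    using inj_on_edge_rank[OF assms(1)] unfolding inj_on_def by blast
  then show "nth_edge E j \<in> E" "edge_rank E (nth_edge E j) = j"
    unfolding nth_edge_def by (metis (mono_tags, lifting) theI')+
qed

lemma nth_edge_edge_rank: "simple_graph n E \<Longrightarrow> e \<in> E \<Longrightarrow> nth_edge E (edge_rank E e) = e"
  unfolding nth_edge_def using inj_on_edge_rank unfolding inj_on_def by (intro the_equality) auto

lemma set_mes_seq:
  "x \<in> set (mes_seq F \<sigma> k) \<Longrightarrow> \<exists>j. 1 \<le> j \<and> j \<le> k \<and> x = Min (\<sigma> - F j)"
proof (induction k)
  case 0
  then show ?case by simp
next
  case (Suc k)
  let ?C = "set (mes_seq F \<sigma> k) \<inter> (\<sigma> - F (Suc k))"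
  have "Min ?C \<in> set (mes_seq F \<sigma> k)" if "?C \<noteq> {}"
    using Min_in[of ?C] that by simp
  then have "x \<in> set (mes_seq F \<sigma> k) \<or> x = Min (\<sigma> - F (Suc k))"
    using Suc.prems by (simp add: Let_def split: if_splits; blast)
  then show ?case
  proof
    assume "x \<in> set (mes_seq F \<sigma> k)"
    then show ?case using Suc.IH le_SucI by blast
  qed (intro exI[of _ "Suc k"], simp)
qed

lemma first_idx_facet:
  assumes sg: "simple_graph n E" and "\<sigma> \<in> NC n E"
  defines "t \<equiv> first_idx n E \<sigma>"
  shows "1 \<le> t" "t \<le> card E" "\<sigma> \<inter> nth_edge E t = {}"
    and "\<And>j. 1 \<le> j \<Longrightarrow> j < t \<Longrightarrow> \<sigma> \<inter> nth_edge E j \<noteq> {}"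
proof -
  define P where "P j \<longleftrightarrow> 1 \<le> j \<and> j \<le> card E \<and> \<sigma> \<subseteq> facet n E j" for j
  have t_Least: "t = (LEAST j. P j)" unfolding t_def first_idx_def P_def ..
  obtain e where e: "e \<in> E" "e \<subseteq> {1..n} - \<sigma>" and \<sigma>_sub: "\<sigma> \<subseteq> {1..n}"
    using \<open>\<sigma> \<in> NC n E\<close> unfolding NC_def by auto
  have "P (edge_rank E e)"
    unfolding P_def facet_eq nth_edge_edge_rank[OF sg e(1)]
    using edge_rank_bounds[OF simple_graph_finite[OF sg] e(1)] e \<sigma>_sub by auto
  then have "P t" unfolding t_Least by (rule LeastI)
  then show "1 \<le> t" "t \<le> card E" "\<sigma> \<inter> nth_edge E t = {}" unfolding P_def facet_eq by auto
  show "\<sigma> \<inter> nth_edge E j \<noteq> {}" if "1 \<le> j" "j < t" for j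
  proof -
    have "\<not> P j" using \<open>j < t\<close> unfolding t_Least by (rule not_less_Least)
    then show ?thesis using that \<open>P t\<close> \<sigma>_sub unfolding P_def facet_eq by auto
  qed
qed

lemma Mset_least_vertexE:
  assumes sg: "simple_graph n E" and \<sigma>: "\<sigma> \<in> NC n E" and x: "x \<in> Mset n E \<sigma>"
  obtains e where "e \<in> E" "x \<in> \<sigma> \<inter> e" "\<forall>z \<in> \<sigma> \<inter> e. x \<le> z"
    "Max e \<le> Max (nth_edge E (first_idx n E \<sigma>))"
proof -
  define t where "t = first_idx n E \<sigma>"
  have \<sigma>_sub: "\<sigma> \<subseteq> {1..n}" using \<sigma> unfolding NC_def by auto
  obtain j where j: "1 \<le> j" "j \<le> t - 1" "x = Min (\<sigma> - facet n E j)"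
    using set_mes_seq[of x] x unfolding Mset_def mes_def t_def by blast
  have "j < t" using j(1,2) by arith
  have "t \<le> card E" using first_idx_facet(2)[OF sg \<sigma>] unfolding t_def .
  then have ej: "nth_edge E j \<in> E" "edge_rank E (nth_edge E j) = j"
    using nth_edge_in_edges[OF sg j(1)] \<open>j < t\<close> by simp_all
  have et: "nth_edge E t \<in> E" "edge_rank E (nth_edge E t) = t"
    using nth_edge_in_edges[OF sg first_idx_facet(1)[OF sg \<sigma>] \<open>t \<le> card E\<close>[unfolded t_def]]
    unfolding t_def by simp_all
  have fin: "finite (\<sigma> \<inter> nth_edge E j)"
    using simple_graph_edge_subset[OF sg ej(1)] finite_subset by blast
  have meet: "\<sigma> - facet n E j = \<sigma> \<inter> nth_edge E j" using \<sigma>_sub unfolding facet_eq by auto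
  have "\<sigma> \<inter> nth_edge E j \<noteq> {}"
    using first_idx_facet(4)[OF sg \<sigma> j(1)] \<open>j < t\<close> unfolding t_def by simp
  then have x_least: "x \<in> \<sigma> \<inter> nth_edge E j" "\<forall>z \<in> \<sigma> \<inter> nth_edge E j. x \<le> z"
    using j(3) Min_in[OF fin] Min_le[OF fin] unfolding meet by simp_all
  have "nth_edge E j \<noteq> nth_edge E t" using ej(2) et(2) \<open>j < t\<close> by auto
  moreover have "\<not> edge_lt (nth_edge E t) (nth_edge E j)"
    using edge_rank_less[OF simple_graph_finite[OF sg] et(1) ej(1)] ej(2) et(2) \<open>j < t\<close> by linarith
  ultimately have "edge_lt (nth_edge E j) (nth_edge E t)"
    using edge_lt_total[OF sg ej(1) et(1)] by blast
  then have "Max (nth_edge E j) \<le> Max (nth_edge E t)" unfolding edge_lt_def by auto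
  then show thesis using that[OF ej(1) x_least] unfolding t_def by blast
qed

lemma Mset_subset: "simple_graph n E \<Longrightarrow> \<sigma> \<in> NC n E \<Longrightarrow> Mset n E \<sigma> \<subseteq> \<sigma>"
  using Mset_least_vertexE by blast

definition escaping :: "nat set set \<Rightarrow> nat set \<Rightarrow> nat set \<Rightarrow> nat set" where
  "escaping E A M = {x \<in> A - M. \<exists>w. {x, w} \<in> E \<and> w \<notin> M}"

lemma gammaA_le_card:
  assumes "D \<subseteq> {1..n}" "\<forall>a \<in> A. \<exists>d \<in> D. {a, d} \<in> E"
  shows "gammaA n E A \<le> card D"
proof -
  have "{card D |D. D \<subseteq> {1..n} \<and> (\<forall>a\<in>A. \<exists>d\<in>D. {a, d} \<in> E)} \<subseteq> {0..n}"
    using card_mono[of "{1..n}"] by fastforce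
  then show ?thesis
    unfolding gammaA_def using assms by (intro Min_le) (auto intro: finite_subset)
qed

lemma gammaA_add_card_le:
  assumes sg: "simple_graph n E" and A: "A \<subseteq> {1..n}" and M: "M \<subseteq> {1..n}" and R: "R \<subseteq> A - M"
    and nbr: "\<forall>a \<in> A. \<exists>d. {a, d} \<in> E"
    and out: "\<forall>x \<in> (A \<inter> M) \<union> R. \<exists>w. {x, w} \<in> E \<and> w \<notin> A \<union> M"
  shows "gammaA n E A + card M + card R \<le> n"
proof -
  define f where "f a = (SOME d. {a, d} \<in> E)" for a
  have f: "{a, f a} \<in> E" if "a \<in> A" for a
    unfolding f_def using nbr that someI_ex[of "\<lambda>d. {a, d} \<in> E"] by blast
  have in_range: "w \<in> {1..n}" if "{x, w} \<in> E" for x w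
    using simple_graph_edge_subset[OF sg that] by simp
  define D where "D = ({1..n} - (A \<union> M)) \<union> f ` (A - M - R)"
  have "f ` (A - M - R) \<subseteq> {1..n}" using f in_range by blast
  then have "D \<subseteq> {1..n}" unfolding D_def by blast
  moreover have "\<forall>a \<in> A. \<exists>d \<in> D. {a, d} \<in> E"
  proof
    fix a assume "a \<in> A"
    show "\<exists>d \<in> D. {a, d} \<in> E"
    proof (cases "a \<in> M \<union> R")
      case True
      then obtain w where w: "{a, w} \<in> E" "w \<notin> A \<union> M" using out \<open>a \<in> A\<close> by blast
      then have "w \<in> D" unfolding D_def using in_range by blast
      then show ?thesis using w(1) by blast
    next
      case False
      then have "f a \<in> D" unfolding D_def using \<open>a \<in> A\<close> by blast
      then show ?thesis using f \<open>a \<in> A\<close> by blast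
    qed
  qed
  ultimately have "gammaA n E A \<le> card D" by (rule gammaA_le_card)
  have fin: "finite A" "finite M" "finite R"
    using A M R finite_subset[OF _ finite_atLeastAtMost] by blast+
  have "card D \<le> card ({1..n} - (A \<union> M)) + card (f ` (A - M - R))"
    unfolding D_def by (rule card_Un_le)
  also have "\<dots> \<le> card ({1..n} - (A \<union> M)) + card (A - M - R)"
    using card_image_le[of "A - M - R" f] fin by simp
  finally have "card D \<le> card ({1..n} - (A \<union> M)) + card (A - M - R)" .
  moreover have "card ({1..n} - (A \<union> M)) = n - card (A \<union> M)"
    using A M by (simp add: card_Diff_subset fin)
  moreover have "card (A \<union> M) = card (A - M) + card M"
    using card_Un_disjoint[of "A - M" M] fin by (simp add: Un_Diff_cancel2 inf_commute)
  moreover have "card (A - M - R) = card (A - M) - card R"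
    using R fin by (simp add: card_Diff_subset)
  moreover have "card R \<le> card (A - M)" using card_mono[OF _ R] fin by simp
  moreover have "card (A \<union> M) \<le> n" using card_mono[of "{1..n}" "A \<union> M"] A M by simp
  ultimately show ?thesis using \<open>gammaA n E A \<le> card D\<close> by linarith
qed

lemma beta_le_card_escaping:
  assumes "M \<subseteq> \<sigma>" "finite I"
  shows "beta n E I \<sigma> \<le> card (escaping E I M)"
  unfolding beta_def
proof (rule card_mono)
  show "finite (escaping E I M)" unfolding escaping_def using \<open>finite I\<close> by simp
  show "nbhd E (({1..n} - \<sigma>) \<inter> ({1..n} - I)) \<inter> ({1..n} - \<sigma>) \<inter> I \<subseteq> escaping E I M"
  proof
    fix x assume x: "x \<in> nbhd E (({1..n} - \<sigma>) \<inter> ({1..n} - I)) \<inter> ({1..n} - \<sigma>) \<inter> I"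
    then obtain u where "u \<notin> \<sigma>" "{u, x} \<in> E" unfolding nbhd_def by blast
    then have "{x, u} \<in> E" "u \<notin> M" using \<open>M \<subseteq> \<sigma>\<close> by (auto simp only: insert_commute)
    then show "x \<in> escaping E I M" using x \<open>M \<subseteq> \<sigma>\<close> unfolding escaping_def by blast
  qed
qed

lemma top_segment_neighbour:
  assumes sg: "simple_graph n E" and I: "indep n E I" "I = {k<..n}" and x: "x \<in> I"
    and edge: "{x, w} \<in> E"
  shows "w \<notin> I" "w < x"
proof -
  show "w \<notin> I"
  proof
    assume "w \<in> I"
    then have "{x, w} \<subseteq> I" using x by simp
    then show False using I(1) edge unfolding indep_def by blast
  qed
  moreover have "w \<le> n" using simple_graph_edge_subset[OF sg edge] by simp
  ultimately have "w \<le> k" using I(2) by simp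
  then show "w < x" using x I(2) by simp
qed

lemma Mset_card_bound:
  assumes sg: "simple_graph n E" and isolated: "no_isolated n E" and I: "indep n E I" "I = {k<..n}"
    and \<sigma>: "\<sigma> \<in> NC n E"
  shows "gammaA n E I + card (Mset n E \<sigma>) + card (escaping E I (Mset n E \<sigma>)) \<le> n"
proof (rule gammaA_add_card_le[OF sg])
  let ?M = "Mset n E \<sigma>"
  have I_sub: "I \<subseteq> {1..n}" using I(1) unfolding indep_def by simp
  then show "I \<subseteq> {1..n}" .
  show "?M \<subseteq> {1..n}" using Mset_subset[OF sg \<sigma>] \<sigma> unfolding NC_def by blast
  show "escaping E I ?M \<subseteq> I - ?M" unfolding escaping_def by blast
  show "\<forall>a \<in> I. \<exists>d. {a, d} \<in> E"
  proof
    fix a assume "a \<in> I"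
    then obtain e where e: "e \<in> E" "a \<in> e" using isolated I_sub unfolding no_isolated_def by blast
    then obtain d where "e = {a, d}" using simple_graph_other_endE[OF sg] by blast
    then show "\<exists>d. {a, d} \<in> E" using e(1) by blast
  qed
  show "\<forall>x \<in> (I \<inter> ?M) \<union> escaping E I ?M. \<exists>w. {x, w} \<in> E \<and> w \<notin> I \<union> ?M"
  proof
    fix x assume "x \<in> (I \<inter> ?M) \<union> escaping E I ?M"
    then consider "x \<in> I" "x \<in> ?M" | w where "x \<in> I" "{x, w} \<in> E" "w \<notin> ?M"
      unfolding escaping_def by blast
    then show "\<exists>w. {x, w} \<in> E \<and> w \<notin> I \<union> ?M"
    proof cases
      case 1
      obtain e where e: "e \<in> E" "x \<in> \<sigma> \<inter> e" "\<forall>z \<in> \<sigma> \<inter> e. x \<le> z"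
        using Mset_least_vertexE[OF sg \<sigma> \<open>x \<in> ?M\<close>] by blast
      obtain w where w: "e = {x, w}" "w \<noteq> x" using simple_graph_other_endE[OF sg e(1)] e(2) by blast
      have "w \<notin> I" "w < x" using top_segment_neighbour[OF sg I \<open>x \<in> I\<close>] e(1) w(1) by auto
      have "w \<notin> \<sigma>"
      proof
        assume "w \<in> \<sigma>"
        then have "x \<le> w" using e(3) w(1) by blast
        then show False using \<open>w < x\<close> by simp
      qed
      then have "w \<notin> ?M" using Mset_subset[OF sg \<sigma>] by blast
      then show ?thesis using \<open>w \<notin> I\<close> e(1) w(1) by blast
    next
      case (2 w)
      then show ?thesis using top_segment_neighbour(1)[OF sg I \<open>x \<in> I\<close>] by blast
    qed
  qed
qed

lemma escaping_nonempty:
  assumes sg: "simple_graph n E" and I: "maximal_indep n E I" "I = {k<..n}"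
    and e: "e \<in> E" "e \<inter> M = {}" and below: "\<forall>x \<in> M. x \<le> Max e"
  shows "escaping E I M \<noteq> {}"
proof -
  obtain a b where ab: "e = {a, b}" "a < b" "b \<le> n" using simple_graph_edgeE[OF sg e(1)] by metis
  have "Max e = b" "b \<notin> M" using ab e(2) by auto
  have "{b, a} \<in> E" using e(1) ab(1) by (simp only: insert_commute)
  show ?thesis
  proof (cases "b \<in> I")
    case True
    then have "b \<in> escaping E I M"
      using \<open>{b, a} \<in> E\<close> \<open>b \<notin> M\<close> ab(1) e(2) unfolding escaping_def by blast
    then show ?thesis by blast
  next
    case False
    have indep: "indep n E I" using I(1) unfolding maximal_indep_def by simp
    have "b \<in> {1..n}" using simple_graph_edge_subset[OF sg e(1)] ab(1) by blast
    then have "insert b I \<subseteq> {1..n}" using indep unfolding indep_def by blast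
    then have "\<not> indep n E (insert b I)" using I(1) False unfolding maximal_indep_def by blast
    then obtain f where f: "f \<in> E" "f \<subseteq> insert b I"
      using \<open>insert b I \<subseteq> {1..n}\<close> unfolding indep_def by blast
    have "b \<in> f" using f indep unfolding indep_def by blast
    obtain y where y: "f = {b, y}" "y \<noteq> b" by (rule simple_graph_other_endE[OF sg f(1) \<open>b \<in> f\<close>])
    have "y \<in> I" using y f(2) by blast
    have "{y, b} \<in> E" using f(1) y by (simp only: insert_commute)
    have "b < y" using False \<open>y \<in> I\<close> I(2) ab(3) by simp
    then have "y \<notin> M" using below \<open>Max e = b\<close> by fastforce
    then have "y \<in> escaping E I M"
      using \<open>y \<in> I\<close> \<open>{y, b} \<in> E\<close> \<open>b \<notin> M\<close> unfolding escaping_def by blast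
    then show ?thesis by blast
  qed
qed

lemma Mset_le_Max_first_edge:
  assumes sg: "simple_graph n E" and \<sigma>: "\<sigma> \<in> NC n E" and "x \<in> Mset n E \<sigma>"
  shows "x \<le> Max (nth_edge E (first_idx n E \<sigma>))"
proof -
  obtain e where e: "e \<in> E" "x \<in> \<sigma> \<inter> e" "\<forall>z \<in> \<sigma> \<inter> e. x \<le> z"
    "Max e \<le> Max (nth_edge E (first_idx n E \<sigma>))"
    by (rule Mset_least_vertexE[OF sg \<sigma> \<open>x \<in> Mset n E \<sigma>\<close>])
  have "finite e" using simple_graph_edge_subset[OF sg e(1)] finite_subset by blast
  then have "x \<le> Max e" using e(2) by simp
  then show ?thesis using e(4) by linarith
qed

lemma escaping_Mset_nonempty:
  assumes sg: "simple_graph n E" and I: "maximal_indep n E I" "I = {k<..n}" and \<sigma>: "\<sigma> \<in> NC n E"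
  shows "escaping E I (Mset n E \<sigma>) \<noteq> {}"
proof (rule escaping_nonempty[OF sg I])
  let ?e = "nth_edge E (first_idx n E \<sigma>)"
  show "?e \<in> E" using nth_edge_in_edges[OF sg] first_idx_facet(1,2)[OF sg \<sigma>] by blast
  show "?e \<inter> Mset n E \<sigma> = {}" using first_idx_facet(3)[OF sg \<sigma>] Mset_subset[OF sg \<sigma>] by blast
  show "\<forall>x \<in> Mset n E \<sigma>. x \<le> Max ?e" using Mset_le_Max_first_edge[OF sg \<sigma>] by blast
qed

theorem mainTheorem4:
  fixes n i :: nat and E :: "nat set set" and I :: "nat set"
  assumes "simple_graph n E"
    and "no_isolated n E"
    and "i \<le> n"
    and "I = {n - i <.. n}"
    and "maximal_indep n E I"
    and "gammaA n E I = igamma n E"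
  shows "(\<forall>\<sigma>\<in>NC n E. beta n E I \<sigma> \<ge> 1 \<longrightarrow>
            int (card (Mset n E \<sigma>)) \<le> int n - int (igamma n E) - int (beta n E I \<sigma>))
       \<and> (\<forall>\<sigma>\<in>NC n E. int (card (Mset n E \<sigma>)) \<le> int n - int (igamma n E) - 1)"
proof -
  note sg = assms(1)
  have indep: "indep n E I" using assms(5) unfolding maximal_indep_def by simp
  have finite_escaping: "finite (escaping E I M)" for M
    using assms(4) unfolding escaping_def by simp
  have bound: "igamma n E + card (Mset n E \<sigma>) + card (escaping E I (Mset n E \<sigma>)) \<le> n"
    if "\<sigma> \<in> NC n E" for \<sigma>
    using Mset_card_bound[OF sg assms(2) indep assms(4) that] assms(6) by simp
  have beta: "beta n E I \<sigma> \<le> card (escaping E I (Mset n E \<sigma>))" if "\<sigma> \<in> NC n E" for \<sigma>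
    using beta_le_card_escaping[OF Mset_subset[OF sg that]] assms(4) by simp
  have nonempty: "1 \<le> card (escaping E I (Mset n E \<sigma>))" if "\<sigma> \<in> NC n E" for \<sigma>
    using escaping_Mset_nonempty[OF sg assms(5,4) that] finite_escaping
    by (simp add: Suc_le_eq card_gt_0_iff)
  show ?thesis
  proof (intro conjI ballI impI)
    fix \<sigma> assume "\<sigma> \<in> NC n E"
    then show "int (card (Mset n E \<sigma>)) \<le> int n - int (igamma n E) - int (beta n E I \<sigma>)"
      using bound beta by fastforce
  next
    fix \<sigma> assume "\<sigma> \<in> NC n E"
    then show "int (card (Mset n E \<sigma>)) \<le> int n - int (igamma n E) - 1"
      using bound nonempty by fastforce
  qed
qed

end
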